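(* Let $N'\ge2$ and let $\mu_1<0<\mu_2<\cdots<\mu_{N'}$ be real numbers. Let $\delta$ be a sufficiently small positive constant ($0<\delta\ll1$, in particular $\delta<\mu_2$) and let $0<a<1<b<c$ be constants. Define $$\bar x_1=\frac{b-1}{2b[-\mu_1+\delta]},\qquad \bar x_k(m)=\frac{\frac{c+m-1}{m}-a}{2a[\mu_k-\delta]}\quad(2\le k\le N',\ m\ge1).$$ Call admissible any choice of a nonempty set $S\subseteq\{2,\dots,N'\}$ with $m=|S|$, together with positive reals $x_1$ and $(x_k)_{k\in S}$ satisfying $x_1\le\bar x_1$ and $x_k\ge\bar x_k(m)$ for all $k\in S$; for such a choice set $\pi_1=\frac{x_1}{x_1+\sum_{k\in S}x_k}$. Then the maximum of $\pi_1$ over all admissible choices is $$\pi_1^*=\frac{\frac{b-1}{2b[-\mu_1+\delta]}}{\frac{b-1}{2b[-\mu_1+\delta]}+\frac{c-a}{2a[\mu_{N'}-\delta]}},$$ attained with $S=\{N'\}$, $x_1=\bar x_1$, $x_{N'}=\bar x_{N'}(1)$.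
   Context: Setting: graphs $G_1,\dots,G_{N'}$ on a common node set with adjacency matrices $A_l$, constant cure probability $\beta$ and infection probability $\gamma$; configuration $\mathcal C_l=(G_l,\beta,\gamma)$, $\mu_l=\beta-\gamma\lambda_1(A_l)$ where $\lambda_1(A)$ is the eigenvalue of largest modulus. $\mathcal C_1$ violates the epidemic threshold ($\mu_1<0$); $\mathcal C_2,\dots,\mathcal C_{N'}$ are moving-target-defense-induced configurations satisfying it. The defender switches between $\mathcal C_1$ and the configurations $\mathcal C_k$, $k\in S$, by a continuous-time Markov chain with generator $Q$; $x_l=1/(-q_{ll})$ is the expected sojourn time in $\mathcal C_l$ and $\pi_l=x_l/\sum_p x_p$ the portion of time in $\mathcal C_l$. The bounds $x_1\le\bar x_1$, $x_k\ge\bar x_k(m)$ are exactly the sojourn-time conditions of a sufficient almost-sure convergence criterion (with one violating configuration and $m+1$ configurations in total), in which $\delta,a,b,c$ are constants such that there exist symmetric positive definite matrices $P_l$ with $aI<P_k<I$ for the satisfying configurations, $bI<P_1<cI$, and $\{P_l[\gamma A_l-\beta I]\}^s\le[\gamma\lambda_1(A_l)-\beta+\delta/2]P_l$. Thus $\pi_1^*$ is the maximal portion of time the system can stay in $\mathcal C_1$ under this criterion. *)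

theory Defs
  imports "HOL-Analysis.Analysis"
begin

definition xbar1 :: "real \<Rightarrow> real \<Rightarrow> real \<Rightarrow> real" where
  "xbar1 b \<mu>1 \<delta> = (b - 1) / (2 * b * (- \<mu>1 + \<delta>))"

definition xbark :: "real \<Rightarrow> real \<Rightarrow> real \<Rightarrow> real \<Rightarrow> nat \<Rightarrow> real" where
  "xbark a c \<mu>k \<delta> m = ((c + real m - 1) / real m - a) / (2 * a * (\<mu>k - \<delta>))"

definition admissible_pi1 ::
  "nat \<Rightarrow> (nat \<Rightarrow> real) \<Rightarrow> real \<Rightarrow> real \<Rightarrow> real \<Rightarrow> real \<Rightarrow> real set" where
  "admissible_pi1 N' \<mu> \<delta> a b c =
     {x 1 / (x 1 + (\<Sum>k\<in>S. x k)) | S x.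
        S \<noteq> {} \<and> S \<subseteq> {2..N'} \<and> x 1 > 0 \<and> (\<forall>k\<in>S. x k > 0) \<and>
        x 1 \<le> xbar1 b (\<mu> 1) \<delta> \<and>
        (\<forall>k\<in>S. x k \<ge> xbark a c (\<mu> k) \<delta> (card S))}"

end

theory Submission
  imports Defs
begin

text \<open>Every satisfying configuration in S must be visited for at least its lower bound, and this
  bound, weighted by m = card S, is smallest when m = 1 and the only configuration has the largest
  decay rate \<open>\<mu> N'\<close>. Hence the total time outside the violating configuration is at least
  \<open>xbark a c (\<mu> N') \<delta> 1\<close>, while the time inside it is at most \<open>xbar1\<close>; the fraction
  \<open>x\<^sub>1 / (x\<^sub>1 + s)\<close> is increasing in \<open>x\<^sub>1\<close> and decreasing in \<open>s\<close>.\<close>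

lemma mono_on_interval_Suc:
  fixes f :: "nat \<Rightarrow> 'a::preorder"
  assumes Suc_step: "\<And>k. m \<le> k \<Longrightarrow> k < n \<Longrightarrow> f k \<le> f (Suc k)"
    and "m \<le> j" "j \<le> k" "k \<le> n"
  shows "f j \<le> f k"
  using \<open>j \<le> k\<close> \<open>k \<le> n\<close>
proof (induction k rule: dec_induct)
  case (step i)
  then show ?case
    using assms(2) Suc_step[of i] by (auto intro: order_trans)
qed simp

lemma xbar1_pos: "1 < b \<Longrightarrow> \<mu>1 < \<delta> \<Longrightarrow> 0 < xbar1 b \<mu>1 \<delta>"
  unfolding xbar1_def by (intro divide_pos_pos) auto

lemma xbark_numerator:
  "m \<ge> 1 \<Longrightarrow> (c + real m - 1) / real m - a = (c - 1) / real m + 1 - a"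
  by (simp add: field_simps)

lemma xbark_numerator_pos:
  assumes "a < 1" "1 \<le> c" "m \<ge> 1"
  shows "0 < (c + real m - 1) / real m - a"
proof -
  have "0 \<le> (c - 1) / real m"
    using assms by simp
  then show ?thesis
    unfolding xbark_numerator[OF \<open>m \<ge> 1\<close>] using assms by linarith
qed

lemma xbark_pos:
  assumes "0 < a" "a < 1" "1 \<le> c" "m \<ge> 1" "\<delta> < \<mu>k"
  shows "0 < xbark a c \<mu>k \<delta> m"
  unfolding xbark_def using assms xbark_numerator_pos[of a c m]
  by (intro divide_pos_pos) auto

lemma xbark_antimono:
  assumes "0 < a" "a < 1" "1 \<le> c" "m \<ge> 1" "\<delta> < \<mu>j" "\<mu>j \<le> \<mu>k"
  shows "xbark a c \<mu>k \<delta> m \<le> xbark a c \<mu>j \<delta> m"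
  unfolding xbark_def using assms xbark_numerator_pos[of a c m]
  by (intro divide_left_mono mult_left_mono mult_pos_pos) auto

lemma card_mult_xbark_ge:
  assumes "0 < a" "a < 1" "m \<ge> 1" "\<delta> < \<mu>k"
  shows "xbark a c \<mu>k \<delta> 1 \<le> real m * xbark a c \<mu>k \<delta> m"
proof -
  have "c - a \<le> c - a + (real m - 1) * (1 - a)"
    using assms by simp
  also have "\<dots> = real m * ((c + real m - 1) / real m - a)"
    using assms by (simp add: field_simps)
  finally show ?thesis
    unfolding xbark_def times_divide_eq_right using assms
    by (intro divide_right_mono) auto
qed

lemma divide_add_mono:
  fixes x X s T :: real
  assumes "0 < x" "x \<le> X" "0 < T" "T \<le> s"
  shows "x / (x + s) \<le> X / (X + T)"
proof -
  have "x / (x + s) \<le> x / (x + T)"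
    using assms by (intro divide_left_mono) auto
  also have "\<dots> \<le> X / (X + T)"
    using assms by (simp add: field_simps mult_right_mono)
  finally show ?thesis .
qed

lemma sum_admissible_ge:
  assumes S: "finite S" "S \<noteq> {}" and \<mu>S: "\<And>k. k \<in> S \<Longrightarrow> \<delta> < \<mu> k \<and> \<mu> k \<le> \<mu>max"
    and x: "\<And>k. k \<in> S \<Longrightarrow> xbark a c (\<mu> k) \<delta> (card S) \<le> x k"
    and "0 < a" "a < 1" "1 \<le> c"
  shows "xbark a c \<mu>max \<delta> 1 \<le> (\<Sum>k\<in>S. x k)"
proof -
  have m: "card S \<ge> 1" and \<delta>max: "\<delta> < \<mu>max"
    using S \<mu>S by (auto simp: Suc_le_eq card_gt_0_iff dest: order_less_le_trans)
  have "xbark a c \<mu>max \<delta> 1 \<le> real (card S) * xbark a c \<mu>max \<delta> (card S)"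
    using card_mult_xbark_ge assms m \<delta>max by blast
  also have "\<dots> = (\<Sum>k\<in>S. xbark a c \<mu>max \<delta> (card S))"
    by simp
  also have "\<dots> \<le> (\<Sum>k\<in>S. xbark a c (\<mu> k) \<delta> (card S))"
    using assms m \<mu>S by (intro sum_mono xbark_antimono) auto
  also have "\<dots> \<le> (\<Sum>k\<in>S. x k)"
    using x by (intro sum_mono)
  finally show ?thesis .
qed

lemma admissible_pi1_le:
  assumes \<mu>: "\<And>k. 2 \<le> k \<Longrightarrow> k \<le> N' \<Longrightarrow> \<delta> < \<mu> k \<and> \<mu> k \<le> \<mu> N'"
    and "0 < a" "a < 1" "1 \<le> c" "\<delta> < \<mu> N'"
    and p: "p \<in> admissible_pi1 N' \<mu> \<delta> a b c"
  shows "p \<le> xbar1 b (\<mu> 1) \<delta> / (xbar1 b (\<mu> 1) \<delta> + xbark a c (\<mu> N') \<delta> 1)"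
proof -
  obtain S x where p_eq: "p = x 1 / (x 1 + (\<Sum>k\<in>S. x k))"
    and S: "S \<noteq> {}" "S \<subseteq> {2..N'}" and "0 < x 1" "x 1 \<le> xbar1 b (\<mu> 1) \<delta>"
    and xS: "\<forall>k\<in>S. xbark a c (\<mu> k) \<delta> (card S) \<le> x k"
    using p unfolding admissible_pi1_def by blast
  have "xbark a c (\<mu> N') \<delta> 1 \<le> (\<Sum>k\<in>S. x k)"
    using S xS assms by (intro sum_admissible_ge[where \<mu>=\<mu>]) (auto intro: finite_subset)
  then show ?thesis
    unfolding p_eq using assms \<open>0 < x 1\<close> \<open>x 1 \<le> _\<close>
    by (intro divide_add_mono xbark_pos) auto
qed

lemma admissible_pi1_singleton:
  assumes "N' \<ge> 2" "0 < xbar1 b (\<mu> 1) \<delta>" "0 < xbark a c (\<mu> N') \<delta> 1"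
  shows "xbar1 b (\<mu> 1) \<delta> / (xbar1 b (\<mu> 1) \<delta> + xbark a c (\<mu> N') \<delta> 1)
           \<in> admissible_pi1 N' \<mu> \<delta> a b c"
proof -
  define x where "x i = (if i = 1 then xbar1 b (\<mu> 1) \<delta> else xbark a c (\<mu> N') \<delta> 1)" for i :: nat
  have "N' \<noteq> 1"
    using assms by simp
  then have "xbar1 b (\<mu> 1) \<delta> / (xbar1 b (\<mu> 1) \<delta> + xbark a c (\<mu> N') \<delta> 1)
      = x 1 / (x 1 + (\<Sum>k\<in>{N'}. x k))"
    by (simp add: x_def)
  moreover have "{N'} \<subseteq> {2..N'}" "0 < x 1" "x 1 \<le> xbar1 b (\<mu> 1) \<delta>"
    "\<forall>k\<in>{N'}. 0 < x k \<and> xbark a c (\<mu> k) \<delta> (card {N'}) \<le> x k"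
    using assms \<open>N' \<noteq> 1\<close> by (auto simp: x_def)
  ultimately show ?thesis
    unfolding admissible_pi1_def by blast
qed

theorem theorem5:
  fixes N' :: nat and \<mu> :: "nat \<Rightarrow> real" and \<delta> a b c :: real
  assumes "N' \<ge> 2"
    and "\<mu> 1 < 0" and "0 < \<mu> 2"
    and "\<And>k. 2 \<le> k \<Longrightarrow> k < N' \<Longrightarrow> \<mu> k < \<mu> (Suc k)"
    and "0 < \<delta>" and "\<delta> < \<mu> 2"
    and "0 < a" and "a < 1" and "1 < b" and "b < c"
  shows "(let pstar = ((b - 1) / (2 * b * (- \<mu> 1 + \<delta>))) /
            ((b - 1) / (2 * b * (- \<mu> 1 + \<delta>)) + (c - a) / (2 * a * (\<mu> N' - \<delta>)))
         in pstar \<in> admissible_pi1 N' \<mu> \<delta> a b c \<and>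
            (\<forall>p\<in>admissible_pi1 N' \<mu> \<delta> a b c. p \<le> pstar) \<and>
            0 < xbar1 b (\<mu> 1) \<delta> \<and> 0 < xbark a c (\<mu> N') \<delta> 1 \<and>
            xbar1 b (\<mu> 1) \<delta> / (xbar1 b (\<mu> 1) \<delta> + (\<Sum>k\<in>{N'}. xbark a c (\<mu> k) \<delta> (card {N'}))) = pstar)"
proof -
  have mono: "\<mu> j \<le> \<mu> k" if "2 \<le> j" "j \<le> k" "k \<le> N'" for j k
    using mono_on_interval_Suc[of 2 N' \<mu>] assms(4) that by fastforce
  have \<mu>: "\<delta> < \<mu> k \<and> \<mu> k \<le> \<mu> N'" if "2 \<le> k" "k \<le> N'" for k
    using mono[of 2 k] mono[of k N'] that assms(6) by auto
  have pos: "0 < xbar1 b (\<mu> 1) \<delta>" "0 < xbark a c (\<mu> N') \<delta> 1"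
    using assms \<mu>[of N'] by (auto intro: xbar1_pos xbark_pos)
  have pstar: "(b - 1) / (2 * b * (- \<mu> 1 + \<delta>)) = xbar1 b (\<mu> 1) \<delta>"
    "(c - a) / (2 * a * (\<mu> N' - \<delta>)) = xbark a c (\<mu> N') \<delta> 1"
    unfolding xbar1_def xbark_def by simp_all
  show ?thesis
    unfolding Let_def pstar
    using admissible_pi1_singleton[OF assms(1) pos] admissible_pi1_le[of N' \<delta> \<mu>, OF \<mu>] assms pos \<mu>[of N']
    by auto
qed

end
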